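(* Let $\mathcal L_{\mathcal N}=(\mathcal L,[\cdot_\lambda\cdot]_{\mathcal L},\mathcal N)$ and $\mathcal H_{\mathcal Q}=(\mathcal H,[\cdot_\lambda\cdot]_{\mathcal H},\mathcal Q)$ be Nijenhuis Lie conformal algebras, let $(\chi_\lambda,\rho,\Phi)$ be a non-abelian $2$-cocycle of $\mathcal L_{\mathcal N}$ with values in $\mathcal H_{\mathcal Q}$ (arising from a non-abelian extension of $\mathcal L_{\mathcal N}$ by $\mathcal H_{\mathcal Q}$ and a section), and let $(\alpha,\beta)\in\mathrm{Aut}(\mathcal H_{\mathcal Q})\times\mathrm{Aut}(\mathcal L_{\mathcal N})$. Define $$\chi^{(\alpha,\beta)}_\lambda(p,q):=\alpha\big(\chi_\lambda(\beta^{-1}(p),\beta^{-1}(q))\big),\quad \rho^{(\alpha,\beta)}(p)_\lambda h:=\alpha\big(\rho(\beta^{-1}(p))_\lambda\alpha^{-1}(h)\big),\quad \Phi^{(\alpha,\beta)}(p):=\alpha\big(\Phi(\beta^{-1}(p))\big)$$ for $p,q\in\mathcal L$, $h\in\mathcal H$. Then $(\chi^{(\alpha,\beta)}_\lambda,\rho^{(\alpha,\beta)},\Phi^{(\alpha,\beta)})$ is a non-abelian $2$-cocycle of $\mathcal L_{\mathcal N}$ with values in $\mathcal H_{\mathcal Q}$.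
   Context: All spaces are over $\mathbb C$. A Lie conformal algebra is a $\mathbb C[\partial]$-module with a $\mathbb C$-bilinear $\lambda$-bracket satisfying $[\partial a_\lambda b]=-\lambda[a_\lambda b]$, $[a_\lambda\partial b]=(\partial+\lambda)[a_\lambda b]$, $[a_\lambda b]=-[b_{-\partial-\lambda}a]$, $[a_\lambda[b_\mu c]]=[[a_\lambda b]_{\lambda+\mu}c]+[b_\mu[a_\lambda c]]$. A Nijenhuis operator is a $\mathbb C[\partial]$-linear $\mathcal N$ with $[\mathcal N(p)_\lambda\mathcal N(q)]=\mathcal N([\mathcal N(p)_\lambda q]+[p_\lambda\mathcal N(q)]-\mathcal N([p_\lambda q]))$; a Nijenhuis Lie conformal algebra is a Lie conformal algebra with a Nijenhuis operator; $\mathrm{Aut}(\cdot)$ is the group of bijective bracket-preserving $\mathbb C[\partial]$-linear self-maps commuting with the Nijenhuis operator. A non-abelian $2$-cocycle of $\mathcal L_{\mathcal N}$ with values in $\mathcal H_{\mathcal Q}$ is a triple $\chi_\lambda:\mathcal L\otimes\mathcal L\to\mathcal H[\lambda]$, $\rho:\mathcal L\otimes\mathcal H\to\mathcal H[\lambda]$, $\Phi:\mathcal L\to\mathcal H$ satisfying for all $p,q,r\in\mathcal L$, $h\in\mathcal H$: (i) $\rho(p)_\lambda\rho(q)_\mu h-\rho(q)_\mu\rho(p)_\lambda h-\rho([p_\lambda q]_{\mathcal L})_{\lambda+\mu}h=[\chi_\lambda(p,q)_{\lambda+\mu}h]_{\mathcal H}$; (ii) $\rho(p)_\lambda\chi_\mu(q,r)+\rho(q)_\mu\chi_\lambda(r,p)+\rho(r)_{-\partial-\lambda-\mu}\chi_\lambda(p,q)-\chi_{\lambda+\mu}([q_\mu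 r]_{\mathcal L},p)-\chi_{\lambda+\mu}([r_{-\partial-\lambda}p]_{\mathcal L},q)-\chi_{\lambda+\mu}([p_\lambda q]_{\mathcal L},r)=0$; (iii) $\rho(\mathcal Np)_\lambda\mathcal Q(h)=\mathcal Q(\rho(\mathcal Np)_\lambda h+\rho(p)_\lambda\mathcal Q(h)-\mathcal Q(\rho(p)_\lambda h))+\mathcal Q([\Phi(p)_\lambda h]_{\mathcal H})-[\Phi(p)_\lambda\mathcal Q(h)]_{\mathcal H}$; (iv) $\chi_\lambda(\mathcal Np,\mathcal Nq)-\mathcal Q(\chi_\lambda(\mathcal Np,q)+\chi_\lambda(p,\mathcal Nq)-\mathcal Q\chi_\lambda(p,q))-\Phi([\mathcal N(p)_\lambda q]_{\mathcal L}+[p_\lambda\mathcal N(q)]_{\mathcal L}-\mathcal N[p_\lambda q]_{\mathcal L})+\rho(\mathcal Np)_\lambda\Phi(q)-\rho(\mathcal Nq)_{-\partial-\lambda}\Phi(p)+\mathcal Q(\rho(q)_{-\partial-\lambda}\Phi(p)-\rho(p)_\lambda\Phi(q)+\Phi([p_\lambda q]_{\mathcal L}))+[\Phi(p)_\lambda\Phi(q)]_{\mathcal H}=0$. Such a triple arises from a non-abelian extension $0\to\mathcal H_{\mathcal Q}\to\mathcal E_{\mathcal R}\xrightarrow{proj}\mathcal L_{\mathcal N}\to0$ (a $\mathbb C[\partial]$-split short exact sequence of Nijenhuis Lie conformal algebras) and a $\mathbb C[\partial]$-linear section $s$ of $proj$ via $\chi_\lambda(p,q)=[s(p)_\lambda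 s(q)]_{\mathcal E}-s([p_\lambda q]_{\mathcal L})$, $\rho(p)_\lambda h=[s(p)_\lambda h]_{\mathcal E}$, $\Phi(p)=\mathcal R(s(p))-s(\mathcal N(p))$. *)

theory Defs
  imports "HOL-Computational_Algebra.Polynomial"
begin

(* A (Nijenhuis) Lie conformal algebra on a carrier type 'a:
   scal = complex scalar multiplication, der = the operator \<partial>,
   brk a b = [a_\<lambda> b] \<in> 'a[\<lambda>] (a polynomial in \<lambda> with coefficients in 'a),
   nij = the Nijenhuis operator. *)
declare [[typedef_overloaded]]

record 'a nlca =
  scal :: "complex \<Rightarrow> 'a \<Rightarrow> 'a"
  der  :: "'a \<Rightarrow> 'a"
  brk  :: "'a \<Rightarrow> 'a \<Rightarrow> 'a poly"
  nij  :: "'a \<Rightarrow> 'a"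

(* Elements of M[\<lambda>,\<mu>] are represented by their coefficient functions:
   F i j = coefficient of \<lambda>^i \<mu>^j. *)

definition multinom :: "nat \<Rightarrow> nat \<Rightarrow> nat \<Rightarrow> nat" where
  "multinom x y z = fact (x + y + z) div (fact x * fact y * fact z)"

(* For p = \<Sum>_n \<nu>^n c_n \<in> M[\<nu>], psub s d e a b p is the element of M[\<lambda>,\<mu>]
   obtained by substituting \<nu> := e\<partial> + a\<lambda> + b\<mu>, where \<partial> acts on the coefficients:
   (e\<partial>+a\<lambda>+b\<mu>)^n c = \<Sum>_{x+y+z=n} n!/(x!y!z!) e^x a^y b^z \<lambda>^y \<mu>^z \<partial>^x c. *)
definition psub :: "(complex \<Rightarrow> 'm::ab_group_add \<Rightarrow> 'm) \<Rightarrow> ('m \<Rightarrow> 'm)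
      \<Rightarrow> complex \<Rightarrow> complex \<Rightarrow> complex \<Rightarrow> 'm poly \<Rightarrow> nat \<Rightarrow> nat \<Rightarrow> 'm" where
  "psub s d e a b p y z =
     (\<Sum>x\<in>{..degree p}. s (of_nat (multinom x y z) * e ^ x * a ^ y * b ^ z)
                         ((d ^^ x) (coeff p (x + y + z))))"

(* \<Sum>_k \<lambda>^k F_k  and  \<Sum>_k \<mu>^k F_k  for a family of elements F_k of M[\<lambda>,\<mu>] *)
definition lam_fam :: "(nat \<Rightarrow> nat \<Rightarrow> nat \<Rightarrow> 'm::comm_monoid_add) \<Rightarrow> nat \<Rightarrow> nat \<Rightarrow> 'm" where
  "lam_fam F i j = (\<Sum>k\<in>{..i}. F k (i - k) j)"

definition mu_fam :: "(nat \<Rightarrow> nat \<Rightarrow> nat \<Rightarrow> 'm::comm_monoid_add) \<Rightarrow> nat \<Rightarrow> nat \<Rightarrow> 'm" where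
  "mu_fam F i j = (\<Sum>k\<in>{..j}. F k i (j - k))"

definition cdmod :: "(complex \<Rightarrow> 'm::ab_group_add \<Rightarrow> 'm) \<Rightarrow> ('m \<Rightarrow> 'm) \<Rightarrow> bool" where
  "cdmod s d \<longleftrightarrow> vector_space s \<and> (\<forall>x y. d (x + y) = d x + d y) \<and> (\<forall>c x. d (s c x) = s c (d x))"

definition cdlin :: "(complex \<Rightarrow> 'm::ab_group_add \<Rightarrow> 'm) \<Rightarrow> ('m \<Rightarrow> 'm)
      \<Rightarrow> (complex \<Rightarrow> 'n::ab_group_add \<Rightarrow> 'n) \<Rightarrow> ('n \<Rightarrow> 'n) \<Rightarrow> ('m \<Rightarrow> 'n) \<Rightarrow> bool" where
  "cdlin s1 d1 s2 d2 f \<longleftrightarrow> (\<forall>x y. f (x + y) = f x + f y) \<and> (\<forall>c x. f (s1 c x) = s2 c (f x))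
      \<and> (\<forall>x. f (d1 x) = d2 (f x))"

definition clin :: "(complex \<Rightarrow> 'm::ab_group_add \<Rightarrow> 'm) \<Rightarrow> (complex \<Rightarrow> 'n::ab_group_add \<Rightarrow> 'n)
      \<Rightarrow> ('m \<Rightarrow> 'n) \<Rightarrow> bool" where
  "clin s1 s2 f \<longleftrightarrow> (\<forall>x y. f (x + y) = f x + f y) \<and> (\<forall>c x. f (s1 c x) = s2 c (f x))"

definition cbilin :: "(complex \<Rightarrow> 'm::ab_group_add \<Rightarrow> 'm) \<Rightarrow> (complex \<Rightarrow> 'n::ab_group_add \<Rightarrow> 'n)
      \<Rightarrow> (complex \<Rightarrow> 'p::ab_group_add \<Rightarrow> 'p) \<Rightarrow> ('m \<Rightarrow> 'n \<Rightarrow> 'p poly) \<Rightarrow> bool" where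
  "cbilin s1 s2 s3 f \<longleftrightarrow>
     (\<forall>x y z n. coeff (f (x + y) z) n = coeff (f x z) n + coeff (f y z) n) \<and>
     (\<forall>x y z n. coeff (f x (y + z)) n = coeff (f x y) n + coeff (f x z) n) \<and>
     (\<forall>c x z n. coeff (f (s1 c x) z) n = s3 c (coeff (f x z) n)) \<and>
     (\<forall>c x z n. coeff (f x (s2 c z)) n = s3 c (coeff (f x z) n))"

definition lie_conf :: "'a::ab_group_add nlca \<Rightarrow> bool" where
  "lie_conf L \<longleftrightarrow>
     cdmod (scal L) (der L) \<and>
     cbilin (scal L) (scal L) (scal L) (brk L) \<and>
     \<comment> \<open>[\<partial>a_\<lambda> b] = -\<lambda>[a_\<lambda> b]\<close>
     (\<forall>a b n. coeff (brk L (der L a) b) n = - (if n = 0 then 0 else coeff (brk L a b) (n - 1))) \<and>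
     \<comment> \<open>[a_\<lambda> \<partial>b] = (\<partial>+\<lambda>)[a_\<lambda> b]\<close>
     (\<forall>a b n. coeff (brk L a (der L b)) n =
        der L (coeff (brk L a b) n) + (if n = 0 then 0 else coeff (brk L a b) (n - 1))) \<and>
     \<comment> \<open>[a_\<lambda> b] = -[b_{-\<partial>-\<lambda>} a]\<close>
     (\<forall>a b n. coeff (brk L a b) n = - psub (scal L) (der L) (-1) (-1) 0 (brk L b a) n 0) \<and>
     \<comment> \<open>[a_\<lambda>[b_\<mu> c]] = [[a_\<lambda> b]_{\<lambda>+\<mu>} c] + [b_\<mu>[a_\<lambda> c]]\<close>
     (\<forall>a b c i j. coeff (brk L a (coeff (brk L b c) j)) i =
        lam_fam (\<lambda>k. psub (scal L) (der L) 0 1 1 (brk L (coeff (brk L a b) k) c)) i j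
        + coeff (brk L b (coeff (brk L a c) i)) j)"

definition nij_lca :: "'a::ab_group_add nlca \<Rightarrow> bool" where
  "nij_lca L \<longleftrightarrow> lie_conf L \<and> cdlin (scal L) (der L) (scal L) (der L) (nij L) \<and>
     (\<forall>p q n. coeff (brk L (nij L p) (nij L q)) n =
        nij L (coeff (brk L (nij L p) q) n + coeff (brk L p (nij L q)) n
               - nij L (coeff (brk L p q) n)))"

definition nlca_aut :: "'a::ab_group_add nlca \<Rightarrow> ('a \<Rightarrow> 'a) \<Rightarrow> bool" where
  "nlca_aut L f \<longleftrightarrow> bij f \<and> cdlin (scal L) (der L) (scal L) (der L) f \<and>
     (\<forall>a b n. f (coeff (brk L a b) n) = coeff (brk L (f a) (f b)) n) \<and>
     (\<forall>x. f (nij L x) = nij L (f x))"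

definition nonab_cocycle :: "'l::ab_group_add nlca \<Rightarrow> 'h::ab_group_add nlca
     \<Rightarrow> ('l \<Rightarrow> 'l \<Rightarrow> 'h poly) \<Rightarrow> ('l \<Rightarrow> 'h \<Rightarrow> 'h poly) \<Rightarrow> ('l \<Rightarrow> 'h) \<Rightarrow> bool" where
  "nonab_cocycle L H \<chi> \<rho> \<Phi> \<longleftrightarrow>
     cbilin (scal L) (scal L) (scal H) \<chi> \<and>
     cbilin (scal L) (scal H) (scal H) \<rho> \<and>
     clin (scal L) (scal H) \<Phi> \<and>
     \<comment> \<open>(i)\<close>
     (\<forall>p q h i j.
        coeff (\<rho> p (coeff (\<rho> q h) j)) i - coeff (\<rho> q (coeff (\<rho> p h) i)) j
        - lam_fam (\<lambda>k. psub (scal H) (der H) 0 1 1 (\<rho> (coeff (brk L p q) k) h)) i j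
        = lam_fam (\<lambda>k. psub (scal H) (der H) 0 1 1 (brk H (coeff (\<chi> p q) k) h)) i j) \<and>
     \<comment> \<open>(ii)\<close>
     (\<forall>p q r i j.
        coeff (\<rho> p (coeff (\<chi> q r) j)) i
        + coeff (\<rho> q (coeff (\<chi> r p) i)) j
        + lam_fam (\<lambda>k. psub (scal H) (der H) (-1) (-1) (-1) (\<rho> r (coeff (\<chi> p q) k))) i j
        - mu_fam (\<lambda>k. psub (scal H) (der H) 0 1 1 (\<chi> (coeff (brk L q r) k) p)) i j
        - lam_fam (\<lambda>k. psub (scal H) (der H) 0 1 1
                      (\<chi> (psub (scal L) (der L) (-1) (-1) 0 (brk L r p) k 0) q)) i j
        - lam_fam (\<lambda>k. psub (scal H) (der H) 0 1 1 (\<chi> (coeff (brk L p q) k) r)) i j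
        = 0) \<and>
     \<comment> \<open>(iii)\<close>
     (\<forall>p h n.
        coeff (\<rho> (nij L p) (nij H h)) n =
          nij H (coeff (\<rho> (nij L p) h) n + coeff (\<rho> p (nij H h)) n
                 - nij H (coeff (\<rho> p h) n))
          + nij H (coeff (brk H (\<Phi> p) h) n) - coeff (brk H (\<Phi> p) (nij H h)) n) \<and>
     \<comment> \<open>(iv)\<close>
     (\<forall>p q n.
        coeff (\<chi> (nij L p) (nij L q)) n
        - nij H (coeff (\<chi> (nij L p) q) n + coeff (\<chi> p (nij L q)) n - nij H (coeff (\<chi> p q) n))
        - \<Phi> (coeff (brk L (nij L p) q) n + coeff (brk L p (nij L q)) n - nij L (coeff (brk L p q) n))
        + coeff (\<rho> (nij L p) (\<Phi> q)) n
        - psub (scal H) (der H) (-1) (-1) 0 (\<rho> (nij L q) (\<Phi> p)) n 0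
        + nij H (psub (scal H) (der H) (-1) (-1) 0 (\<rho> q (\<Phi> p)) n 0
                 - coeff (\<rho> p (\<Phi> q)) n + \<Phi> (coeff (brk L p q) n))
        + coeff (brk H (\<Phi> p) (\<Phi> q)) n
        = 0)"

end

theory Submission
  imports Defs
begin

(* Conjugation by (\<alpha>, \<beta>) transports the cocycle along the automorphisms: each
   cocycle condition of the twisted triple at (p, q, r, h) is \<alpha> applied to the same
   condition of the original triple at (\<beta>\<^sup>-\<^sup>1 p, \<beta>\<^sup>-\<^sup>1 q, \<beta>\<^sup>-\<^sup>1 r, \<alpha>\<^sup>-\<^sup>1 h), because \<alpha> and \<beta> commute
   with \<partial>, the brackets, the Nijenhuis operators and the substitutions \<nu> := e\<partial> + a\<lambda> + b\<mu>. *)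

lemma cdlin_additive: "cdlin s1 d1 s2 d2 f \<Longrightarrow> additive f"
  unfolding cdlin_def by (simp add: additive.intro)

lemma clin_additive: "clin s1 s2 f \<Longrightarrow> additive f"
  unfolding clin_def by (simp add: additive.intro)

lemma cdlin_imp_clin: "cdlin s1 d1 s2 d2 f \<Longrightarrow> clin s1 s2 f"
  unfolding cdlin_def clin_def by blast

lemma clin_compose: "clin s1 s2 f \<Longrightarrow> clin s2 s3 g \<Longrightarrow> clin s1 s3 (\<lambda>x. g (f x))"
  unfolding clin_def by simp

lemma cdlin_funpow:
  assumes "cdlin s1 d1 s2 d2 f"
  shows "f ((d1 ^^ n) x) = (d2 ^^ n) (f x)"
  using assms by (induction n) (simp_all add: cdlin_def)

lemma cdlin_inv:
  assumes lin: "cdlin s1 d1 s2 d2 f" and "bij f"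
  shows "cdlin s2 d2 s1 d1 (inv f)"
proof -
  have "inj f" and f_inv: "f (inv f x) = x" for x
    using \<open>bij f\<close> by (simp_all add: bij_is_inj bij_is_surj surj_f_inv_f)
  show ?thesis
    unfolding cdlin_def
    by (intro conjI allI inv_f_eq[OF \<open>inj f\<close>]) (use lin in \<open>simp_all add: cdlin_def f_inv\<close>)
qed

lemma cbilin_twist:
  assumes "cbilin s1 s2 s3 B" and "clin t1 s1 g1" and "clin t2 s2 g2" and "clin s3 t3 h"
  shows "cbilin t1 t2 t3 (\<lambda>x y. map_poly h (B (g1 x) (g2 y)))"
proof -
  have "h 0 = 0"
    using additive.zero[OF clin_additive[OF \<open>clin s3 t3 h\<close>]] .
  with assms show ?thesis
    unfolding cbilin_def clin_def by (simp add: coeff_map_poly)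
qed

lemma psub_map_poly:
  assumes lin: "cdlin s1 d1 s2 d2 f" and "inj f"
  shows "psub s2 d2 e a b (map_poly f P) y z = f (psub s1 d1 e a b P y z)"
proof -
  interpret additive f
    using cdlin_additive[OF lin] .
  have "degree (map_poly f P) = degree P"
    using \<open>inj f\<close> by (metis degree_map_poly zero injD)
  then show ?thesis
    using lin
    by (simp add: psub_def sum coeff_map_poly zero cdlin_funpow[OF lin] cdlin_def)
qed

lemma lam_fam_additive: "additive f \<Longrightarrow> f (lam_fam F i j) = lam_fam (\<lambda>k y z. f (F k y z)) i j"
  unfolding lam_fam_def by (rule additive.sum)

lemma mu_fam_additive: "additive f \<Longrightarrow> f (mu_fam F i j) = mu_fam (\<lambda>k y z. f (F k y z)) i j"
  unfolding mu_fam_def by (rule additive.sum)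

lemma nlca_aut_clin: "nlca_aut L f \<Longrightarrow> clin (scal L) (scal L) f"
  unfolding nlca_aut_def by (blast intro: cdlin_imp_clin)

lemma nlca_aut_map_poly_brk:
  assumes "nlca_aut L f"
  shows "map_poly f (brk L a b) = brk L (f a) (f b)"
proof (rule poly_eqI)
  have "f 0 = 0"
    using assms cdlin_additive additive.zero unfolding nlca_aut_def by blast
  with assms show "coeff (map_poly f (brk L a b)) n = coeff (brk L (f a) (f b)) n" for n
    unfolding nlca_aut_def by (simp add: coeff_map_poly)
qed

lemma nlca_aut_inv:
  assumes "nlca_aut L f"
  shows "nlca_aut L (inv f)"
proof -
  have "bij f" and lin: "cdlin (scal L) (der L) (scal L) (der L) f"
    using assms unfolding nlca_aut_def by auto
  then have "inj f" and f_inv: "f (inv f x) = x" for x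
    by (simp_all add: bij_is_inj bij_is_surj surj_f_inv_f)
  show ?thesis
    unfolding nlca_aut_def
    using assms bij_imp_bij_inv[OF \<open>bij f\<close>] cdlin_inv[OF lin \<open>bij f\<close>]
    by (auto intro!: inv_f_eq[OF \<open>inj f\<close>] simp: nlca_aut_def f_inv)
qed

(* Oriented to push f inwards: then \<alpha> applied to an original axiom and the twisted
   axiom simplify to the same normal form. *)
lemma nlca_aut_simps:
  assumes aut: "nlca_aut L f"
  shows "f 0 = 0" and "f (x + y) = f x + f y" and "f (x - y) = f x - f y"
    and "coeff (map_poly f P) n = f (coeff P n)"
    and "f (coeff (brk L a b) n) = coeff (brk L (f a) (f b)) n"
    and "map_poly f (brk L a b) = brk L (f a) (f b)"
    and "f (nij L x) = nij L (f x)"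
    and "f (psub (scal L) (der L) e c d P u v) = psub (scal L) (der L) e c d (map_poly f P) u v"
    and "f (lam_fam F i j) = lam_fam (\<lambda>k u v. f (F k u v)) i j"
    and "f (mu_fam F i j) = mu_fam (\<lambda>k u v. f (F k u v)) i j"
    and "f (inv f x) = x" and "inv f (f x) = x"
proof -
  have lin: "cdlin (scal L) (der L) (scal L) (der L) f" and "bij f"
    using aut unfolding nlca_aut_def by auto
  interpret additive f
    using cdlin_additive[OF lin] .
  show "f 0 = 0" "f (x + y) = f x + f y" "f (x - y) = f x - f y"
    by (simp_all add: zero add diff)
  show "coeff (map_poly f P) n = f (coeff P n)"
    by (simp add: coeff_map_poly zero)
  show "f (coeff (brk L a b) n) = coeff (brk L (f a) (f b)) n"
    and "f (nij L x) = nij L (f x)"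
    using aut unfolding nlca_aut_def by simp_all
  show "map_poly f (brk L a b) = brk L (f a) (f b)"
    by (rule nlca_aut_map_poly_brk[OF aut])
  show "f (psub (scal L) (der L) e c d P u v) = psub (scal L) (der L) e c d (map_poly f P) u v"
    using psub_map_poly[OF lin bij_is_inj[OF \<open>bij f\<close>]] by simp
  show "f (lam_fam F i j) = lam_fam (\<lambda>k u v. f (F k u v)) i j"
    and "f (mu_fam F i j) = mu_fam (\<lambda>k u v. f (F k u v)) i j"
    by (simp_all add: lam_fam_additive mu_fam_additive additive_axioms)
  show "f (inv f x) = x" and "inv f (f x) = x"
    using \<open>bij f\<close> by (simp_all add: bij_is_inj bij_is_surj surj_f_inv_f)
qed

lemma nonab_cocycle_twist:
  assumes cocycle: "nonab_cocycle L H \<chi> \<rho> \<Phi>" and \<alpha>: "nlca_aut H \<alpha>" and \<beta>: "nlca_aut L \<beta>"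
  shows "nonab_cocycle L H
           (\<lambda>p q. map_poly \<alpha> (\<chi> (inv \<beta> p) (inv \<beta> q)))
           (\<lambda>p h. map_poly \<alpha> (\<rho> (inv \<beta> p) (inv \<alpha> h)))
           (\<lambda>p. \<alpha> (\<Phi> (inv \<beta> p)))"
proof -
  have clin_\<alpha>: "clin (scal H) (scal H) \<alpha>" and clin_inv_\<alpha>: "clin (scal H) (scal H) (inv \<alpha>)"
    and clin_inv_\<beta>: "clin (scal L) (scal L) (inv \<beta>)"
    using \<alpha> nlca_aut_inv[OF \<alpha>] nlca_aut_inv[OF \<beta>] by (simp_all add: nlca_aut_clin)
  note transport = nlca_aut_simps[OF \<alpha>] nlca_aut_simps[OF nlca_aut_inv[OF \<alpha>]]
    nlca_aut_simps[OF nlca_aut_inv[OF \<beta>]]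
  show ?thesis
  proof (insert cocycle, unfold nonab_cocycle_def, elim conjE, intro conjI allI, goal_cases)
    \<comment> \<open>the k-th premise of case k is the k-th axiom for the original triple\<close>
    case 1
    show ?case by (rule cbilin_twist[OF 1(1) clin_inv_\<beta> clin_inv_\<beta> clin_\<alpha>])
  next
    case 2
    show ?case by (rule cbilin_twist[OF 2(2) clin_inv_\<beta> clin_inv_\<alpha> clin_\<alpha>])
  next
    case 3
    show ?case by (rule clin_compose[OF clin_inv_\<beta> clin_compose[OF 3(3) clin_\<alpha>]])
  next
    case (4 p q h i j)
    show ?case
      using arg_cong[where f = \<alpha>, OF 4(4)[rule_format,
          where p = "inv \<beta> p" and q = "inv \<beta> q" and h = "inv \<alpha> h" and i = i and j = j]]
      by (simp add: transport)
  next
    case (5 p q r i j)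
    show ?case
      using arg_cong[where f = \<alpha>, OF 5(5)[rule_format,
          where p = "inv \<beta> p" and q = "inv \<beta> q" and r = "inv \<beta> r" and i = i and j = j]]
      by (simp add: transport)
  next
    case (6 p h n)
    show ?case
      using arg_cong[where f = \<alpha>, OF 6(6)[rule_format, where p = "inv \<beta> p" and h = "inv \<alpha> h" and n = n]]
      by (simp add: transport)
  next
    case (7 p q n)
    show ?case
      using arg_cong[where f = \<alpha>, OF 7(7)[rule_format, where p = "inv \<beta> p" and q = "inv \<beta> q" and n = n]]
      by (simp add: transport)
  qed
qed

theorem lemma6p2:
  fixes L :: "'l::ab_group_add nlca" and H :: "'h::ab_group_add nlca"
    and \<chi> :: "'l \<Rightarrow> 'l \<Rightarrow> 'h poly" and \<rho> :: "'l \<Rightarrow> 'h \<Rightarrow> 'h poly" and \<Phi> :: "'l \<Rightarrow> 'h"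
    and \<alpha> :: "'h \<Rightarrow> 'h" and \<beta> :: "'l \<Rightarrow> 'l"
  assumes "nij_lca L" and "nij_lca H"
    and "nonab_cocycle L H \<chi> \<rho> \<Phi>"
    and "nlca_aut H \<alpha>" and "nlca_aut L \<beta>"
  shows "nonab_cocycle L H
           (\<lambda>p q. map_poly \<alpha> (\<chi> (inv \<beta> p) (inv \<beta> q)))
           (\<lambda>p h. map_poly \<alpha> (\<rho> (inv \<beta> p) (inv \<alpha> h)))
           (\<lambda>p. \<alpha> (\<Phi> (inv \<beta> p)))"
  using assms(3-5) by (rule nonab_cocycle_twist)

end
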